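(* Let an instance of the UDODOSP with exact requests $r^d:=r_l^d=r_u^d$ be given and set $R^d=\sum_{i=1}^d r^i$ for $0\le d\le D$ (so $R^0=0$). If the instance is feasible, then $R^D\le N U_w$; $\;N D-R^D\le N U_o$; $\;R^{d+u_w}-R^{d-1}\le N u_w$ for all $1\le d\le D-u_w$; and $\;R^{d+u_o}-R^{d-1}\ge N$ for all $1\le d\le D-u_o$.
   Context: An instance of the Days On Days Off Scheduling Problem (DODOSP) consists of integers $D\ge 1$ (days), $N\ge 1$ (workers), bounds $l_w,u_w,l_o,u_o,U_w,U_o\in\mathbb{N}$, and for each day $d\in\{1,\dots,D\}$ integers $0\le r_l^d\le r_u^d\le N$. A schedule is a map $f:\{n_1,\dots,n_N\}\times\{1,\dots,D\}\to\{\mathrm{ON},\mathrm{OFF}\}$ (not cyclic). A work period (resp. off period) of a worker is an inclusion-wise maximal set of consecutive days on which the worker is ON (resp. OFF). A schedule is feasible if on every day $d$ the number of workers that are ON lies in $[r_l^d,r_u^d]$, every work period has length between $l_w$ and $u_w$, every off period has length between $l_o$ and $u_o$, every worker is ON on at most $U_w$ days and OFF on at most $U_o$ days. An instance is feasible if a feasible schedule exists. The UDODOSP is the DODOSP restricted to instances with $l_w=l_o=1$. *)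

theory Defs
  imports Main
begin

text \<open>Schedules: workers are indexed by 0..N-1, days by 1..D.
  sched n d = True means worker n is ON on day d, False means OFF.\<close>

definition is_period :: "nat \<Rightarrow> (nat \<Rightarrow> nat \<Rightarrow> bool) \<Rightarrow> nat \<Rightarrow> bool \<Rightarrow> nat \<Rightarrow> nat \<Rightarrow> bool" where
  "is_period D sched n v a b \<longleftrightarrow>
     1 \<le> a \<and> a \<le> b \<and> b \<le> D \<and>
     (\<forall>d\<in>{a..b}. sched n d = v) \<and>
     (a = 1 \<or> sched n (a - 1) \<noteq> v) \<and>
     (b = D \<or> sched n (b + 1) \<noteq> v)"

definition feasible_schedule ::
  "nat \<Rightarrow> nat \<Rightarrow> nat \<Rightarrow> nat \<Rightarrow> nat \<Rightarrow> nat \<Rightarrow> nat \<Rightarrow> nat \<Rightarrow>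
   (nat \<Rightarrow> nat) \<Rightarrow> (nat \<Rightarrow> nat) \<Rightarrow> (nat \<Rightarrow> nat \<Rightarrow> bool) \<Rightarrow> bool" where
  "feasible_schedule D N lw uw lo uo Uw Uo rl ru sched \<longleftrightarrow>
     (\<forall>d\<in>{1..D}. rl d \<le> card {n. n < N \<and> sched n d} \<and> card {n. n < N \<and> sched n d} \<le> ru d) \<and>
     (\<forall>n<N. \<forall>a b. is_period D sched n True a b \<longrightarrow> lw \<le> b - a + 1 \<and> b - a + 1 \<le> uw) \<and>
     (\<forall>n<N. \<forall>a b. is_period D sched n False a b \<longrightarrow> lo \<le> b - a + 1 \<and> b - a + 1 \<le> uo) \<and>
     (\<forall>n<N. card {d\<in>{1..D}. sched n d} \<le> Uw) \<and>
     (\<forall>n<N. card {d\<in>{1..D}. \<not> sched n d} \<le> Uo)"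

definition feasible_instance ::
  "nat \<Rightarrow> nat \<Rightarrow> nat \<Rightarrow> nat \<Rightarrow> nat \<Rightarrow> nat \<Rightarrow> nat \<Rightarrow> nat \<Rightarrow>
   (nat \<Rightarrow> nat) \<Rightarrow> (nat \<Rightarrow> nat) \<Rightarrow> bool" where
  "feasible_instance D N lw uw lo uo Uw Uo rl ru \<longleftrightarrow>
     (\<exists>sched. feasible_schedule D N lw uw lo uo Uw Uo rl ru sched)"

end

theory Submission
  imports Defs
begin

text \<open>Counting ON worker-days in two ways, the request sum over a set of days equals the sum over
  workers of their ON days in that set. A window of \<open>u + 1\<close> consecutive days cannot be constant
  for a worker whose periods of that value have length at most \<open>u\<close>, since a constant interval
  extends to a period containing it. Hence every worker is ON on at most \<open>u\<^sub>w\<close> days of a window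
  of length \<open>u\<^sub>w + 1\<close> and on at least one day of a window of length \<open>u\<^sub>o + 1\<close>; together with
  the per-worker totals \<open>U\<^sub>w\<close>, \<open>U\<^sub>o\<close> (the OFF requests being \<open>N - r\<^sup>d\<close>) this gives all four
  bounds.\<close>

lemma sum_card_filter_swap:
  assumes "finite A" "finite B"
  shows "(\<Sum>a\<in>A. card {b\<in>B. P a b}) = (\<Sum>b\<in>B. card {a\<in>A. P a b})"
proof -
  have count: "card {c\<in>C. Q c} = (\<Sum>c\<in>C. if Q c then 1 else 0)" if "finite C" for C and Q :: "_ \<Rightarrow> bool"
    using that by (simp add: sum.If_cases Int_def)
  have "(\<Sum>a\<in>A. card {b\<in>B. P a b}) = (\<Sum>a\<in>A. \<Sum>b\<in>B. if P a b then 1 else 0)"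
    using assms(2) by (simp add: count)
  also have "\<dots> = (\<Sum>b\<in>B. \<Sum>a\<in>A. if P a b then 1 else 0)"
    by (rule sum.swap)
  also have "\<dots> = (\<Sum>b\<in>B. card {a\<in>A. P a b})"
    using assms(1) by (simp add: count)
  finally show ?thesis .
qed

lemma constant_interval_in_period:
  assumes "1 \<le> x" "x \<le> y" "y \<le> D" "\<forall>i\<in>{x..y}. sched n i = v"
  shows "\<exists>a b. is_period D sched n v a b \<and> a \<le> x \<and> y \<le> b"
proof -
  define L where "L = {a\<in>{1..x}. \<forall>i\<in>{a..y}. sched n i = v}"
  define a where "a = Min L"
  have "x \<in> L" using assms by (simp add: L_def)
  moreover have "finite L" by (simp add: L_def)
  ultimately have a: "a \<in> L" and a_min: "\<And>a'. a' \<in> L \<Longrightarrow> a \<le> a'"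
    unfolding a_def using Min_in Min_le by blast+
  define U where "U = {b\<in>{y..D}. \<forall>i\<in>{a..b}. sched n i = v}"
  define b where "b = Max U"
  have "y \<in> U" using a assms by (simp add: U_def L_def)
  moreover have "finite U" by (simp add: U_def)
  ultimately have b: "b \<in> U" and b_max: "\<And>b'. b' \<in> U \<Longrightarrow> b' \<le> b"
    unfolding b_def using Max_in Max_ge by blast+
  have "a = 1 \<or> sched n (a - 1) \<noteq> v"
  proof (rule ccontr)
    assume "\<not> ?thesis"
    then obtain a' where a': "a = Suc a'" "1 \<le> a'" "sched n a' = v"
      using a by (cases a) (auto simp: L_def)
    then have "{a'..y} = insert a' {a..y}" using a assms by (auto simp: L_def)
    then have "a' \<in> L" using a a' by (auto simp: L_def)
    then show False using a_min a' by fastforce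
  qed
  moreover have "b = D \<or> sched n (b + 1) \<noteq> v"
  proof (rule ccontr)
    assume "\<not> ?thesis"
    moreover have "{a..Suc b} = insert (Suc b) {a..b}" using a b assms by (auto simp: L_def U_def)
    ultimately have "b + 1 \<in> U" using b by (auto simp: U_def)
    then show False using b_max[of "b + 1"] by simp
  qed
  ultimately have "is_period D sched n v a b"
    using a b assms by (auto simp: is_period_def L_def U_def)
  then show ?thesis using a b by (auto simp: L_def U_def)
qed

lemma window_has_other_value:
  assumes short: "\<forall>a b. is_period D sched n v a b \<longrightarrow> b - a + 1 \<le> u"
    and "1 \<le> d" "d + u \<le> D"
  shows "\<exists>i\<in>{d..d + u}. sched n i \<noteq> v"
proof (rule ccontr)
  assume "\<not> ?thesis"
  then obtain a b where "is_period D sched n v a b" "a \<le> d" "d + u \<le> b"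
    using constant_interval_in_period[of d "d + u" D sched n v] assms by auto
  then show False using short by fastforce
qed

lemma card_window_workdays_le:
  assumes "\<forall>a b. is_period D sched n True a b \<longrightarrow> b - a + 1 \<le> u"
    and "1 \<le> d" "d + u \<le> D"
  shows "card {i\<in>{d..d + u}. sched n i} \<le> u"
proof -
  have "{i\<in>{d..d + u}. sched n i} \<subset> {d..d + u}"
    using window_has_other_value[OF assms] by auto
  then have "card {i\<in>{d..d + u}. sched n i} < card {d..d + u}"
    by (intro psubset_card_mono) auto
  then show ?thesis by simp
qed

lemma card_window_workdays_ge_1:
  assumes "\<forall>a b. is_period D sched n False a b \<longrightarrow> b - a + 1 \<le> u"
    and "1 \<le> d" "d + u \<le> D"
  shows "1 \<le> card {i\<in>{d..d + u}. sched n i}"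
  using window_has_other_value[OF assms] by (auto simp: Suc_le_eq card_gt_0_iff)

lemma sum_requests_eq_sum_workdays:
  fixes N :: nat
  assumes "finite A" "\<forall>d\<in>A. r d = card {n. n < N \<and> sched n d}"
  shows "sum r A = (\<Sum>n<N. card {d\<in>A. sched n d})"
proof -
  have "sum r A = (\<Sum>d\<in>A. card {n\<in>{..<N}. sched n d})"
    using assms(2) by (intro sum.cong) auto
  also have "\<dots> = (\<Sum>n<N. card {d\<in>A. sched n d})"
    by (rule sum_card_filter_swap[OF assms(1) finite_lessThan])
  finally show ?thesis .
qed

lemma card_workers_off:
  "card {n. n < N \<and> \<not> sched n d} = N - card {n. n < N \<and> sched n d}"
proof -
  have "{n. n < N \<and> \<not> sched n d} = {..<N} - {n. n < N \<and> sched n d}" by auto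
  then show ?thesis by (simp add: card_Diff_subset subset_eq)
qed

lemma sum_requests_le:
  fixes N :: nat
  assumes "finite A" "\<forall>d\<in>A. r d = card {n. n < N \<and> sched n d}"
    and "\<forall>n<N. card {d\<in>A. sched n d} \<le> K"
  shows "sum r A \<le> N * K"
  using sum_bounded_above[of "{..<N}" "\<lambda>n. card {d\<in>A. sched n d}" K] assms(3)
  by (simp add: sum_requests_eq_sum_workdays[OF assms(1,2)])

lemma sum_requests_ge:
  fixes N :: nat
  assumes "finite A" "\<forall>d\<in>A. r d = card {n. n < N \<and> sched n d}"
    and "\<forall>n<N. K \<le> card {d\<in>A. sched n d}"
  shows "N * K \<le> sum r A"
  using sum_bounded_below[of "{..<N}" K "\<lambda>n. card {d\<in>A. sched n d}"] assms(3)
  by (simp add: sum_requests_eq_sum_workdays[OF assms(1,2)])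

lemma sum_window_requests_le:
  fixes N :: nat
  assumes "\<forall>i\<in>{1..D}. r i = card {n. n < N \<and> sched n i}"
    and "\<forall>n<N. \<forall>a b. is_period D sched n True a b \<longrightarrow> b - a + 1 \<le> u"
    and "1 \<le> d" "d + u \<le> D"
  shows "sum r {d..d + u} \<le> N * u"
proof -
  have "\<forall>n<N. card {i\<in>{d..d + u}. sched n i} \<le> u"
    using assms(2) by (intro allI impI card_window_workdays_le[OF _ assms(3,4)]) blast
  moreover have "\<forall>i\<in>{d..d + u}. r i = card {n. n < N \<and> sched n i}"
    using assms(1,3,4) by (simp add: subset_eq)
  ultimately show ?thesis by (intro sum_requests_le) auto
qed

lemma sum_window_requests_ge:
  fixes N :: nat
  assumes "\<forall>i\<in>{1..D}. r i = card {n. n < N \<and> sched n i}"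
    and "\<forall>n<N. \<forall>a b. is_period D sched n False a b \<longrightarrow> b - a + 1 \<le> u"
    and "1 \<le> d" "d + u \<le> D"
  shows "N \<le> sum r {d..d + u}"
proof -
  have "\<forall>n<N. 1 \<le> card {i\<in>{d..d + u}. sched n i}"
    using assms(2) by (intro allI impI card_window_workdays_ge_1[OF _ assms(3,4)]) blast
  moreover have "\<forall>i\<in>{d..d + u}. r i = card {n. n < N \<and> sched n i}"
    using assms(1,3,4) by (simp add: subset_eq)
  ultimately have "N * 1 \<le> sum r {d..d + u}" by (intro sum_requests_ge) auto
  then show ?thesis by simp
qed

theorem lemma4p2:
  fixes D N lw uw lo uo Uw Uo :: nat and r :: "nat \<Rightarrow> nat" and R :: "nat \<Rightarrow> nat"
  assumes "D \<ge> 1" and "N \<ge> 1"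
    and "\<forall>d\<in>{1..D}. r d \<le> N"
    and "lw = 1" and "lo = 1"
    and R_def: "\<And>d. R d = (\<Sum>i=1..d. r i)"
    and "feasible_instance D N lw uw lo uo Uw Uo r r"
  shows "R D \<le> N * Uw
    \<and> int (N * D) - int (R D) \<le> int (N * Uo)
    \<and> (\<forall>d. 1 \<le> d \<and> d + uw \<le> D \<longrightarrow> int (R (d + uw)) - int (R (d - 1)) \<le> int (N * uw))
    \<and> (\<forall>d. 1 \<le> d \<and> d + uo \<le> D \<longrightarrow> int (R (d + uo)) - int (R (d - 1)) \<ge> int N)"
proof -
  obtain sched where fs: "feasible_schedule D N lw uw lo uo Uw Uo r r sched"
    using assms(7) unfolding feasible_instance_def by blast
  then have on: "\<forall>d\<in>{1..D}. r d = card {n. n < N \<and> sched n d}"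
    unfolding feasible_schedule_def using le_antisym by blast
  then have off: "\<forall>d\<in>{1..D}. N - r d = card {n. n < N \<and> \<not> sched n d}"
    by (simp add: card_workers_off)
  have work_short: "\<forall>n<N. \<forall>a b. is_period D sched n True a b \<longrightarrow> b - a + 1 \<le> uw"
    and off_short: "\<forall>n<N. \<forall>a b. is_period D sched n False a b \<longrightarrow> b - a + 1 \<le> uo"
    and work_total: "\<forall>n<N. card {d\<in>{1..D}. sched n d} \<le> Uw"
    and off_total: "\<forall>n<N. card {d\<in>{1..D}. \<not> sched n d} \<le> Uo"
    using fs unfolding feasible_schedule_def by blast+
  have R_window: "R (d + k) = R (d - 1) + sum r {d..d + k}" if "1 \<le> d" for d k
    using sum.ub_add_nat[of 1 "d - 1" r "k + 1"] that by (simp add: R_def)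
  have "R D \<le> N * Uw"
    using sum_requests_le[OF _ on work_total] by (simp add: R_def)
  moreover have "int (N * D) - int (R D) \<le> int (N * Uo)"
  proof -
    have "(\<Sum>d=1..D. N - r d) \<le> N * Uo"
      using sum_requests_le[OF _ off off_total] by simp
    moreover have "(\<Sum>d=1..D. N - r d) + R D = N * D"
      using assms(3) by (simp add: R_def sum.distrib[symmetric])
    ultimately show ?thesis by linarith
  qed
  moreover have "int (R (d + uw)) - int (R (d - 1)) \<le> int (N * uw)" if "1 \<le> d" "d + uw \<le> D" for d
    using R_window[OF that(1), of uw] sum_window_requests_le[OF on work_short that]
    by linarith
  moreover have "int (R (d + uo)) - int (R (d - 1)) \<ge> int N" if "1 \<le> d" "d + uo \<le> D" for d
    using R_window[OF that(1), of uo] sum_window_requests_ge[OF on off_short that]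
    by linarith
  ultimately show ?thesis by blast
qed

end
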